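(* For every integer $n\geqslant 2$, \[ f(n,2)\leqslant \min_{\substack{k,l,m\geqslant 0\\ k+l+m=n-2}}\{f(k,2)+f(l,2)+f(m,2)\}+\left[\frac{3n}{2}\right]. \]
   Context: A box in $\mathbb R^d$ is a set $[a_1,b_1]\times\cdots\times[a_d,b_d]$ with edges parallel to the coordinate axes. For a family $\mathscr B$ of boxes, $\nu(\mathscr B)$ is the maximal number of pairwise disjoint members, and $\tau(\mathscr B)$ is the minimal number of points in a set meeting every member. For $n\geqslant 1$, $f(n,d)$ is the supremum of $\tau(\mathscr B)$ over all families $\mathscr B$ of boxes in $\mathbb R^d$ with $\nu(\mathscr B)=n$, and $f(0,d)=0$ by convention. $[x]$ denotes the integer part of $x$; $k,l,m$ range over integers. *)

theory Defs
  imports "HOL-Analysis.Analysis" "HOL-Library.Extended_Nat"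
begin

definition is_box :: "'a::euclidean_space set \<Rightarrow> bool" where
  "is_box B \<longleftrightarrow> (\<exists>a b. (\<forall>i\<in>Basis. a \<bullet> i \<le> b \<bullet> i) \<and> B = cbox a b)"

definition nu :: "'a set set \<Rightarrow> enat" where
  "nu F = Sup {enat (card S) | S. S \<subseteq> F \<and> finite S \<and> pairwise disjnt S}"

definition tau :: "'a set set \<Rightarrow> enat" where
  "tau F = Inf {enat (card P) | P. finite P \<and> (\<forall>B\<in>F. P \<inter> B \<noteq> {})}"

text \<open>f(n,d) with d = DIM('a): supremum of tau over box families with nu = n; f(0,d) = 0.\<close>
definition f_box :: "'a::euclidean_space itself \<Rightarrow> nat \<Rightarrow> enat" where
  "f_box _ n = (if n = 0 then 0 else
     Sup {tau F | F :: 'a set set. (\<forall>B\<in>F. is_box B) \<and> nu F = enat n})"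

abbreviation f2 :: "nat \<Rightarrow> enat" where
  "f2 n \<equiv> f_box TYPE(real^2) n"

end

theory Submission
  imports Defs
begin

text \<open>Let \<open>nu F = n = k + l + m + 2\<close>. Sweeping along the first axis, let \<open>\<alpha>\<close> be the least
  abscissa left of which \<open>F\<close> has \<open>k + 1\<close> disjoint boxes, and \<open>\<beta>\<close> the greatest one right of
  which it has \<open>m + 1\<close> disjoint boxes. The boxes strictly left of \<open>\<alpha>\<close>, strictly between \<open>\<alpha>\<close>
  and \<open>\<beta>\<close>, and strictly right of \<open>\<beta>\<close> have \<open>nu\<close> at most \<open>k\<close>, \<open>l\<close> and \<open>m\<close>, since they can be
  completed by the \<open>k + 1\<close> and \<open>m + 1\<close> boxes found near the two lines. Every remaining box
  meets one of the vertical lines \<open>x\<^sub>1 = \<alpha>\<close>, \<open>x\<^sub>1 = \<beta>\<close>; such a family is pierced by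
  \<open>[3n/2]\<close> points, by induction on \<open>n\<close> via a sweep along the second axis that spends three
  points per two disjoint boxes.\<close>

lemma card_le_nu:
  assumes "S \<subseteq> F" "finite S" "pairwise disjnt S"
  shows "enat (card S) \<le> nu F"
  unfolding nu_def using assms by (auto intro!: Sup_upper)

lemma nu_le_enatI:
  assumes "\<And>S. S \<subseteq> F \<Longrightarrow> finite S \<Longrightarrow> pairwise disjnt S \<Longrightarrow> card S \<le> j"
  shows "nu F \<le> enat j"
  unfolding nu_def using assms by (auto intro!: Sup_least)

lemma nu_mono: "F \<subseteq> G \<Longrightarrow> nu F \<le> nu G"
  unfolding nu_def by (rule Sup_subset_mono) blast

lemma nu_eq_0_iff: "nu F = 0 \<longleftrightarrow> F = {}"
proof
  assume "nu F = 0"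
  show "F = {}"
  proof (rule ccontr)
    assume "F \<noteq> {}"
    then obtain B where "B \<in> F" by blast
    then have "enat (card {B}) \<le> nu F" by (intro card_le_nu) auto
    with \<open>nu F = 0\<close> show False by (simp add: zero_enat_def)
  qed
next
  assume "F = {}"
  then have "nu F \<le> enat 0" by (intro nu_le_enatI) auto
  then show "nu F = 0" by (simp add: zero_enat_def[symmetric])
qed

lemma nu_insert_le: "nu (insert x G) \<le> nu G + 1"
  unfolding nu_def[of "insert x G"]
proof (rule Sup_least, clarify)
  fix S assume S: "S \<subseteq> insert x G" "finite S" "pairwise disjnt S"
  have "enat (card (S - {x})) \<le> nu G"
    by (rule card_le_nu) (use S in \<open>auto intro: pairwise_subset\<close>)
  moreover have "card S \<le> card (S - {x}) + 1"
    using S(2) by (cases "x \<in> S") (auto simp: card_Diff_singleton card_gt_0_iff)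
  ultimately show "enat (card S) \<le> nu G + 1"
    by (metis add_right_mono enat_ord_simps(1) one_enat_def order_trans plus_enat_simps(1))
qed

lemma nu_witness:
  assumes "nu F = enat n"
  obtains S where "S \<subseteq> F" "finite S" "pairwise disjnt S" "card S = n"
proof -
  let ?X = "{enat (card S) | S. S \<subseteq> F \<and> finite S \<and> pairwise disjnt S}"
  have ne: "?X \<noteq> {}" by force
  have "Sup ?X = enat n" using assms unfolding nu_def .
  then have fin: "finite ?X" and "Max ?X = enat n"
    using ne by (auto simp: Sup_enat_def split: if_splits)
  then have "enat n \<in> ?X" using Max_in[OF fin ne] by simp
  then show ?thesis using that by auto
qed

text \<open>Adding the members of a finite family one at a time raises \<open>nu\<close> by at most one per step,
  so every intermediate value is attained.\<close>
lemma nu_intermediate: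
  assumes "finite K" "nu E \<le> enat j" "enat j \<le> nu (E \<union> K)"
  shows "\<exists>E'. E \<subseteq> E' \<and> E' \<subseteq> E \<union> K \<and> nu E' = enat j"
  using assms
proof (induction K rule: finite_induct)
  case empty
  then show ?case by (intro exI[of _ E]) auto
next
  case (insert x K)
  show ?case
  proof (cases "enat j \<le> nu (E \<union> K)")
    case True
    with insert.IH insert.prems(1) show ?thesis by blast
  next
    case False
    then have "nu (E \<union> K) + 1 \<le> enat j"
      using ileI1[of "nu (E \<union> K)" "enat j"] by (simp add: eSuc_plus_1)
    moreover have "nu (E \<union> insert x K) \<le> nu (E \<union> K) + 1"
      using nu_insert_le[of x "E \<union> K"] by simp
    ultimately show ?thesis
      using insert.prems(2) by (intro exI[of _ "E \<union> insert x K"]) (auto intro: antisym)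
  qed
qed

lemma pairwise_disjnt_Un:
  assumes "pairwise disjnt S" "pairwise disjnt T" "\<forall>B\<in>S. \<forall>B'\<in>T. disjnt B B'"
  shows "pairwise disjnt (S \<union> T)"
proof (rule pairwiseI)
  fix x y assume "x \<in> S \<union> T" "y \<in> S \<union> T" "x \<noteq> y"
  then show "disjnt x y"
    using assms pairwiseD[of disjnt] disjnt_sym by (metis UnE)
qed

lemma Int_empty_if_cross_disjnt:
  assumes "{} \<notin> S" "\<forall>B\<in>S. \<forall>B'\<in>T. disjnt B B'"
  shows "S \<inter> T = {}"
  using assms by fastforce

lemma card_Un_le_nu:
  assumes "{} \<notin> F" "S \<subseteq> F" "T \<subseteq> F" "finite S" "finite T"
    and "pairwise disjnt S" "pairwise disjnt T" "\<forall>B\<in>S. \<forall>B'\<in>T. disjnt B B'"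
  shows "enat (card S + card T) \<le> nu F"
proof -
  have "S \<inter> T = {}" using assms(1,2,8) by (intro Int_empty_if_cross_disjnt) auto
  then have "card (S \<union> T) = card S + card T" by (rule card_Un_disjoint[OF assms(4,5)])
  moreover have "enat (card (S \<union> T)) \<le> nu F"
    using assms by (intro card_le_nu pairwise_disjnt_Un) auto
  ultimately show ?thesis by simp
qed

lemma tau_le_card:
  assumes "finite P" "\<And>B. B \<in> F \<Longrightarrow> P \<inter> B \<noteq> {}"
  shows "tau F \<le> enat (card P)"
  unfolding tau_def using assms by (auto intro!: Inf_lower)

lemma tau_witness:
  assumes "tau F \<noteq> \<infinity>"
  obtains P where "finite P" "\<forall>B\<in>F. P \<inter> B \<noteq> {}" "tau F = enat (card P)"
proof -
  let ?X = "{enat (card P) | P. finite P \<and> (\<forall>B\<in>F. P \<inter> B \<noteq> {})}"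
  have "?X \<noteq> {}"
  proof
    assume "?X = {}"
    then have "tau F = Inf {}" unfolding tau_def by (rule arg_cong)
    then have "tau F = \<infinity>" by (simp add: top_enat_def)
    with assms show False by simp
  qed
  then obtain x where "x \<in> ?X" by blast
  then have "(LEAST x. x \<in> ?X) \<in> ?X" by (rule LeastI)
  then have "tau F \<in> ?X" using \<open>?X \<noteq> {}\<close> unfolding tau_def Inf_enat_def by simp
  then show ?thesis using that by auto
qed

lemma tau_empty [simp]: "tau {} = 0"
  using tau_le_card[of "{}" "{}"] by (simp add: zero_enat_def[symmetric])

lemma tau_mono:
  assumes "F \<subseteq> G" shows "tau F \<le> tau G"
proof (cases "tau G = \<infinity>")
  case False
  then obtain P where "finite P" "\<forall>B\<in>G. P \<inter> B \<noteq> {}" "tau G = enat (card P)"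
    by (rule tau_witness)
  with assms show ?thesis using tau_le_card[of P F] by auto
qed simp

lemma tau_Un_le: "tau (F \<union> G) \<le> tau F + tau G"
proof (cases "tau F = \<infinity> \<or> tau G = \<infinity>")
  case False
  then obtain P Q where P: "finite P" "\<forall>B\<in>F. P \<inter> B \<noteq> {}" "tau F = enat (card P)"
     and Q: "finite Q" "\<forall>B\<in>G. Q \<inter> B \<noteq> {}" "tau G = enat (card Q)"
    by (metis tau_witness)
  have "tau (F \<union> G) \<le> enat (card (P \<union> Q))" by (rule tau_le_card) (use P Q in auto)
  also have "\<dots> \<le> enat (card P + card Q)" using card_Un_le[of P Q] by simp
  finally show ?thesis using P Q by simp
qed auto

text \<open>For sets that are not boxes the corners are unspecified.\<close>
definition corners :: "(real^'n) set \<Rightarrow> (real^'n) \<times> (real^'n)" where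
  "corners B = (SOME p. (\<forall>i. fst p $ i \<le> snd p $ i) \<and> B = cbox (fst p) (snd p))"

definition lo :: "(real^'n) set \<Rightarrow> real^'n" where "lo B = fst (corners B)"
definition hi :: "(real^'n) set \<Rightarrow> real^'n" where "hi B = snd (corners B)"

lemma is_box_corners:
  fixes B :: "(real^'n) set"
  assumes "is_box B"
  shows lo_le_hi: "lo B $ i \<le> hi B $ i" and box_eq_cbox_lo_hi: "B = cbox (lo B) (hi B)"
proof -
  from assms obtain a b where ab: "\<forall>i\<in>Basis. a \<bullet> i \<le> b \<bullet> i" "B = cbox a b"
    unfolding is_box_def by blast
  then have "\<forall>i. a $ i \<le> b $ i"
    by (metis box_ne_empty(1) equals0I mem_box_cart(2) order_trans)
  then have "\<exists>p. (\<forall>i. fst p $ i \<le> snd p $ i) \<and> B = cbox (fst p) (snd p)"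
    using ab(2) by (intro exI[of _ "(a, b)"]) auto
  then have "(\<forall>i. lo B $ i \<le> hi B $ i) \<and> B = cbox (lo B) (hi B)"
    unfolding lo_def hi_def corners_def by (rule someI_ex)
  then show "lo B $ i \<le> hi B $ i" "B = cbox (lo B) (hi B)" by auto
qed

lemma mem_is_box_iff:
  assumes "is_box B"
  shows "x \<in> B \<longleftrightarrow> (\<forall>i. lo B $ i \<le> x $ i \<and> x $ i \<le> hi B $ i)"
  by (subst box_eq_cbox_lo_hi[OF assms]) (rule mem_box_cart(2))

lemma lo_mem_box: "is_box B \<Longrightarrow> lo B \<in> B"
  by (simp add: lo_le_hi mem_is_box_iff)

lemma is_box_nonempty: "is_box (B :: (real^'n) set) \<Longrightarrow> B \<noteq> {}"
  using lo_mem_box by fastforce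

lemma disjnt_boxes_if_hi_less_lo:
  assumes "is_box B" "is_box B'" "hi B $ i < lo B' $ i"
  shows "disjnt B B'"
  using assms mem_is_box_iff[OF assms(1)] mem_is_box_iff[OF assms(2)]
  unfolding disjnt_iff by (meson not_le order_trans)

text \<open>Helly's theorem for boxes; the common point is the coordinatewise supremum of the lower
  corners.\<close>
lemma boxes_common_point:
  fixes F :: "(real^'n) set set"
  assumes boxes: "\<forall>B\<in>F. is_box B" and "F \<noteq> {}"
    and meet: "\<forall>B\<in>F. \<forall>B'\<in>F. B \<inter> B' \<noteq> {}"
  shows "\<exists>p. \<forall>B\<in>F. p \<in> B"
proof -
  have lo_le_hi': "lo B $ i \<le> hi B' $ i" if "B \<in> F" "B' \<in> F" for B B' i
  proof -
    have "B \<inter> B' \<noteq> {}" using meet that by simp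
    then obtain x where "x \<in> B" "x \<in> B'" by blast
    moreover have "is_box B" "is_box B'" using boxes that by auto
    ultimately have "lo B $ i \<le> x $ i" "x $ i \<le> hi B' $ i"
      using mem_is_box_iff[of B x] mem_is_box_iff[of B' x] by auto
    then show ?thesis by linarith
  qed
  obtain B0 where "B0 \<in> F" using \<open>F \<noteq> {}\<close> by blast
  have bdd: "bdd_above ((\<lambda>B. lo B $ i) ` F)" for i
    by (rule bdd_aboveI2[where M="hi B0 $ i"], rule lo_le_hi', assumption, rule \<open>B0 \<in> F\<close>)
  define p :: "real^'n" where "p = (\<chi> i. Sup ((\<lambda>B. lo B $ i) ` F))"
  have "lo B $ i \<le> p $ i \<and> p $ i \<le> hi B $ i" if "B \<in> F" for B i
  proof
    show "lo B $ i \<le> p $ i"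
      unfolding p_def vec_lambda_beta by (rule cSup_upper[OF imageI[OF that] bdd])
    show "p $ i \<le> hi B $ i"
      unfolding p_def vec_lambda_beta
      by (rule cSup_least) (use \<open>F \<noteq> {}\<close> lo_le_hi' that in auto)
  qed
  then have "p \<in> B" if "B \<in> F" for B
    using that boxes mem_is_box_iff[of B p] by blast
  then show ?thesis by blast
qed

lemma tau_le_1_if_nu_le_1:
  fixes F :: "(real^'n) set set"
  assumes boxes: "\<forall>B\<in>F. is_box B" and "nu F \<le> 1"
  shows "tau F \<le> 1"
proof (cases "F = {}")
  case False
  have "B \<inter> B' \<noteq> {}" if "B \<in> F" "B' \<in> F" for B B'
  proof (cases "B = B'")
    case True then show ?thesis using is_box_nonempty boxes that by auto
  next
    case False
    show ?thesis
    proof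
      assume "B \<inter> B' = {}"
      then have "enat (card {B, B'}) \<le> nu F"
        using that by (intro card_le_nu) (auto simp: pairwise_def disjnt_def Int_commute)
      then have "enat (card {B, B'}) \<le> 1" using \<open>nu F \<le> 1\<close> by (rule order_trans)
      with False show False by (simp add: one_enat_def)
    qed
  qed
  then obtain p where "\<forall>B\<in>F. p \<in> B" using boxes_common_point[OF boxes False] by blast
  then have "tau F \<le> enat (card {p})" by (intro tau_le_card) auto
  then show ?thesis by (simp add: one_enat_def)
qed simp

lemma tau_le_f_box:
  fixes F :: "'a::euclidean_space set set"
  assumes "\<forall>B\<in>F. is_box B" "nu F = enat n"
  shows "tau F \<le> f_box TYPE('a) n"
proof (cases "n = 0")
  case True
  then have "F = {}" using assms(2) by (simp add: zero_enat_def[symmetric] nu_eq_0_iff)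
  then show ?thesis by simp
next
  case False
  then show ?thesis unfolding f_box_def using assms by (auto intro!: Sup_upper)
qed

text \<open>\<open>f_box\<close> is defined through families with \<open>nu\<close> exactly \<open>j\<close>; a subfamily of a family with
  \<open>nu = n \<ge> j\<close> can be padded up to \<open>nu = j\<close> by members of a maximal disjoint subfamily.\<close>
lemma tau_subfamily_le_f_box:
  fixes F E :: "'a::euclidean_space set set"
  assumes boxes: "\<forall>B\<in>F. is_box B" and "nu F = enat n" and "E \<subseteq> F"
    and "nu E \<le> enat j" and "j \<le> n"
  shows "tau E \<le> f_box TYPE('a) j"
proof -
  obtain K where K: "K \<subseteq> F" "finite K" "pairwise disjnt K" "card K = n"
    using nu_witness[OF \<open>nu F = enat n\<close>] by blast
  have "enat j \<le> nu (E \<union> K)"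
    using card_le_nu[of K "E \<union> K"] K \<open>j \<le> n\<close> by (auto intro: order_trans[rotated])
  then obtain E' where E': "E \<subseteq> E'" "E' \<subseteq> E \<union> K" "nu E' = enat j"
    using nu_intermediate[OF K(2) \<open>nu E \<le> enat j\<close>] by blast
  have "tau E \<le> tau E'" by (rule tau_mono[OF E'(1)])
  also have "\<dots> \<le> f_box TYPE('a) j"
  proof (rule tau_le_f_box)
    show "\<forall>B\<in>E'. is_box B" using E'(2) K(1) \<open>E \<subseteq> F\<close> boxes by blast
  qed (rule E'(3))
  finally show ?thesis .
qed

lemma f_box_le:
  assumes "\<And>F :: 'a::euclidean_space set set. \<forall>B\<in>F. is_box B \<Longrightarrow> nu F = enat n \<Longrightarrow> tau F \<le> c"
  shows "f_box TYPE('a) n \<le> c"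
  unfolding f_box_def using assms by (auto intro!: Sup_least)

text \<open>For boxes, \<open>lower\<close> and \<open>upper\<close> are the ends of their projection to one axis (possibly
  reflected, to sweep from the other side).\<close>
locale separated_family =
  fixes F :: "'a set set" and n :: nat and lower upper :: "'a set \<Rightarrow> real"
  assumes empty_notin: "{} \<notin> F"
    and nu_eq: "nu F = enat n"
    and disjnt_if_upper_less_lower: "B \<in> F \<Longrightarrow> B' \<in> F \<Longrightarrow> upper B < lower B' \<Longrightarrow> disjnt B B'"
begin

definition disjoint_below :: "nat \<Rightarrow> real \<Rightarrow> bool" where
  "disjoint_below j x \<longleftrightarrow>
     (\<exists>S\<subseteq>F. finite S \<and> pairwise disjnt S \<and> card S = j \<and> (\<forall>B\<in>S. upper B \<le> x))"

definition threshold :: "nat \<Rightarrow> real" where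
  "threshold j = Inf (Collect (disjoint_below j))"

lemma card_add_card_le:
  assumes "S \<subseteq> F" "T \<subseteq> F" "finite S" "finite T" "pairwise disjnt S" "pairwise disjnt T"
    and "\<forall>B\<in>S. \<forall>B'\<in>T. disjnt B B'"
  shows "card S + card T \<le> n"
  using card_Un_le_nu[OF empty_notin assms] nu_eq by simp

lemma disjoint_below_exists:
  assumes "j \<le> n"
  shows "\<exists>x. disjoint_below j x"
proof -
  obtain K where K: "K \<subseteq> F" "finite K" "pairwise disjnt K" "card K = n"
    using nu_witness[OF nu_eq] by blast
  then obtain S where S: "S \<subseteq> K" "card S = j" "finite S"
    using obtain_subset_with_card_n[of j K] \<open>j \<le> n\<close> by auto
  have "disjoint_below j (Max (upper ` S))"
    unfolding disjoint_below_def using S K(1,3)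
    by (intro exI[of _ S]) (auto intro: pairwise_subset Max_ge)
  then show ?thesis ..
qed

lemma bdd_below_disjoint_below:
  assumes "0 < j"
  shows "bdd_below (Collect (disjoint_below j))"
proof -
  obtain K where K: "K \<subseteq> F" "finite K" "pairwise disjnt K" "card K = n"
    using nu_witness[OF nu_eq] by blast
  have "Min (insert 0 (lower ` K)) \<le> x" if "disjoint_below j x" for x
  proof (rule ccontr)
    assume "\<not> ?thesis"
    then have below_K: "x < lower B'" if "B' \<in> K" for B'
      using that K(2) by (simp add: not_le Min_gr_iff)
    obtain S where S: "S \<subseteq> F" "finite S" "pairwise disjnt S" "card S = j" "\<forall>B\<in>S. upper B \<le> x"
      using \<open>disjoint_below j x\<close> unfolding disjoint_below_def by blast
    have "\<forall>B\<in>S. \<forall>B'\<in>K. disjnt B B'"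
      using S K(1) below_K by (force intro: disjnt_if_upper_less_lower)
    then have "card S + card K \<le> n" using S K by (intro card_add_card_le) auto
    with S(4) K(4) \<open>0 < j\<close> show False by simp
  qed
  then show ?thesis by (intro bdd_belowI) simp
qed

lemma disjoint_below_if_threshold_less:
  assumes "0 < j" "j \<le> n" "threshold j < z"
  obtains S where "S \<subseteq> F" "finite S" "pairwise disjnt S" "card S = j" "\<forall>B\<in>S. upper B < z"
proof -
  obtain x where "disjoint_below j x" "x < z"
    using cInf_lessD[of "Collect (disjoint_below j)"] disjoint_below_exists[OF \<open>j \<le> n\<close>]
      \<open>threshold j < z\<close> unfolding threshold_def by auto
  then show ?thesis using that unfolding disjoint_below_def by force
qed

lemma card_less_if_below_threshold:
  assumes "0 < j" "S \<subseteq> F" "finite S" "pairwise disjnt S" "\<forall>B\<in>S. upper B < threshold j"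
  shows "card S < j"
proof (rule ccontr)
  assume "\<not> card S < j"
  then obtain S' where S': "S' \<subseteq> S" "card S' = j" "finite S'"
    using obtain_subset_with_card_n[of j S] by auto
  then have "S' \<noteq> {}" using \<open>0 < j\<close> by auto
  have "disjoint_below j (Max (upper ` S'))"
    unfolding disjoint_below_def using S' assms(2,4)
    by (intro exI[of _ S']) (auto intro: pairwise_subset Max_ge)
  then have "threshold j \<le> Max (upper ` S')"
    unfolding threshold_def by (simp add: cInf_lower bdd_below_disjoint_below[OF \<open>0 < j\<close>])
  moreover have "Max (upper ` S') < threshold j"
    using S' \<open>S' \<noteq> {}\<close> assms(5) by (subst Max_less_iff) auto
  ultimately show False by simp
qed

lemma card_add_le_if_above_threshold:
  assumes "0 < j" "j \<le> n" "S \<subseteq> F" "finite S" "pairwise disjnt S"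
    and "\<forall>B\<in>S. threshold j < lower B"
  shows "card S + j \<le> n"
proof (cases "S = {}")
  case False
  have "threshold j < Min (lower ` S)"
    using assms(4,6) False by (subst Min_gr_iff) auto
  then obtain T where T: "T \<subseteq> F" "finite T" "pairwise disjnt T" "card T = j"
    and upper_T: "\<forall>B\<in>T. upper B < Min (lower ` S)"
    using disjoint_below_if_threshold_less[OF \<open>0 < j\<close> \<open>j \<le> n\<close>] by blast
  have "\<forall>B\<in>S. \<forall>B'\<in>T. disjnt B B'"
  proof (intro ballI)
    fix B B' assume "B \<in> S" "B' \<in> T"
    then have "upper B' < lower B"
      using upper_T assms(4) by (meson Min_le finite_imageI imageI order.strict_trans2)
    then have "disjnt B' B"
      using \<open>B \<in> S\<close> \<open>B' \<in> T\<close> assms(3) T(1) by (intro disjnt_if_upper_less_lower) auto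
    then show "disjnt B B'" by (rule disjnt_sym)
  qed
  then have "card S + card T \<le> n" using assms T by (intro card_add_card_le) auto
  then show ?thesis using T(4) by simp
qed (use assms in simp)

end

definition meets_vline :: "real \<Rightarrow> (real^2) set \<Rightarrow> bool" where
  "meets_vline a B \<longleftrightarrow> lo B $ 1 \<le> a \<and> a \<le> hi B $ 1"

lemma tau_le_2_if_meets_vlines_and_hline:
  fixes G :: "(real^2) set set"
  assumes "\<forall>B\<in>G. is_box B \<and> (meets_vline \<alpha> B \<or> meets_vline \<beta> B) \<and> lo B $ 2 \<le> y \<and> y \<le> hi B $ 2"
  shows "tau G \<le> 2"
proof -
  let ?P = "{vector [\<alpha>, y], vector [\<beta>, y]} :: (real^2) set"
  have "?P \<inter> B \<noteq> {}" if "B \<in> G" for B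
  proof -
    obtain a where "a \<in> {\<alpha>, \<beta>}" "meets_vline a B" using assms \<open>B \<in> G\<close> by blast
    then have "vector [a, y] \<in> B" and "vector [a, y] \<in> ?P"
      using assms \<open>B \<in> G\<close> by (auto simp: mem_is_box_iff forall_2 meets_vline_def)
    then show ?thesis by blast
  qed
  then have "tau G \<le> enat (card ?P)" by (intro tau_le_card) auto
  also have "\<dots> \<le> 2" by (simp add: card_insert_if numeral_eq_enat)
  finally show ?thesis .
qed

text \<open>Cut horizontally at the least height \<open>y\<close> below which two disjoint boxes lie: the boxes
  below \<open>y\<close> pairwise intersect, those crossing height \<open>y\<close> are hit where the two lines meet it,
  and the boxes above \<open>y\<close> are disjoint from those two boxes.\<close>
lemma meets_two_vlines_split:
  fixes G :: "(real^2) set set"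
  assumes G: "\<forall>B\<in>G. is_box B \<and> (meets_vline \<alpha> B \<or> meets_vline \<beta> B)"
    and "nu G = enat n" "2 \<le> n"
  obtains H where "H \<subseteq> G" "nu H \<le> enat (n - 2)" "tau G \<le> 3 + tau H"
proof -
  have boxes: "\<forall>B\<in>G. is_box B" using G by blast
  interpret separated_family G n "\<lambda>B. lo B $ 2" "\<lambda>B. hi B $ 2"
    using boxes \<open>nu G = enat n\<close> is_box_nonempty disjnt_boxes_if_hi_less_lo
    by unfold_locales blast+
  define y where "y = threshold 2"
  define Below where "Below = {B\<in>G. hi B $ 2 < y}"
  define Across where "Across = {B\<in>G. lo B $ 2 \<le> y \<and> y \<le> hi B $ 2}"
  define Above where "Above = {B\<in>G. y < lo B $ 2}"
  have "nu Below \<le> enat 1"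
  proof (rule nu_le_enatI)
    fix S assume "S \<subseteq> Below" "finite S" "pairwise disjnt S"
    then have "card S < 2"
      by (intro card_less_if_below_threshold) (auto simp: Below_def y_def)
    then show "card S \<le> 1" by simp
  qed
  then have "tau Below \<le> 1"
    using boxes by (intro tau_le_1_if_nu_le_1) (auto simp: Below_def one_enat_def)
  moreover have "tau Across \<le> 2"
    using G by (intro tau_le_2_if_meets_vlines_and_hline) (auto simp: Across_def)
  ultimately have "tau (Below \<union> Across) \<le> 3"
    using tau_Un_le[of Below Across] add_mono[of "tau Below" 1 "tau Across" 2] by simp
  moreover have "G \<subseteq> (Below \<union> Across) \<union> Above"
    unfolding Below_def Across_def Above_def by auto
  ultimately have "tau G \<le> 3 + tau Above"
    using tau_Un_le[of "Below \<union> Across" Above] tau_mono[of G]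
    by (meson add_right_mono order_trans)
  moreover have "nu Above \<le> enat (n - 2)"
  proof (rule nu_le_enatI)
    fix S assume "S \<subseteq> Above" "finite S" "pairwise disjnt S"
    then have "card S + 2 \<le> n"
      using \<open>2 \<le> n\<close> by (intro card_add_le_if_above_threshold) (auto simp: Above_def y_def)
    then show "card S \<le> n - 2" by simp
  qed
  moreover have "Above \<subseteq> G" unfolding Above_def by blast
  ultimately show ?thesis using that by blast
qed

lemma tau_le_if_meets_two_vlines:
  fixes G :: "(real^2) set set"
  assumes "\<forall>B\<in>G. is_box B \<and> (meets_vline \<alpha> B \<or> meets_vline \<beta> B)" and "nu G \<le> enat n"
  shows "tau G \<le> enat (3 * n div 2)"
  using assms
proof (induction n arbitrary: G rule: less_induct)
  case (less n)
  obtain n' where n': "nu G = enat n'" "n' \<le> n"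
    using less.prems(2) by (metis enat_ile enat_ord_simps(1))
  consider "n' = 0" | "n' = 1" | "2 \<le> n'" by linarith
  then show ?case
  proof cases
    case 1
    then have "G = {}" using n'(1) by (simp add: zero_enat_def[symmetric] nu_eq_0_iff)
    then show ?thesis by simp
  next
    case 2
    then have "tau G \<le> 1"
      using less.prems(1) n'(1) by (intro tau_le_1_if_nu_le_1) (auto simp: one_enat_def)
    also have "\<dots> \<le> enat (3 * n div 2)" using 2 n'(2) by (simp add: one_enat_def)
    finally show ?thesis .
  next
    case 3
    obtain H where H: "H \<subseteq> G" "nu H \<le> enat (n' - 2)" "tau G \<le> 3 + tau H"
      using meets_two_vlines_split[OF less.prems(1) n'(1) 3] by blast
    have "tau H \<le> enat (3 * (n - 2) div 2)"
      using H(1,2) 3 n'(2) less.prems(1) by (intro less.IH) (auto intro: order_trans)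
    then have "tau G \<le> 3 + enat (3 * (n - 2) div 2)" using H(3) by (meson add_left_mono order_trans)
    also have "\<dots> = enat (3 * n div 2)" using 3 n'(2) by (simp add: numeral_eq_enat)
    finally show ?thesis .
  qed
qed

locale planar_box_family =
  fixes F :: "(real^2) set set" and n :: nat
  assumes boxes: "\<forall>B\<in>F. is_box B" and nu_F: "nu F = enat n"
begin

lemma empty_notin_F: "{} \<notin> F"
  using boxes is_box_nonempty by blast

sublocale L: separated_family F n "\<lambda>B. lo B $ 1" "\<lambda>B. hi B $ 1"
  using empty_notin_F nu_F boxes disjnt_boxes_if_hi_less_lo by unfold_locales blast+

sublocale R: separated_family F n "\<lambda>B. - hi B $ 1" "\<lambda>B. - lo B $ 1"
proof
  fix B B' assume "B \<in> F" "B' \<in> F" "- lo B $ 1 < - hi B' $ 1"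
  then have "disjnt B' B" using boxes by (intro disjnt_boxes_if_hi_less_lo) auto
  then show "disjnt B B'" by (rule disjnt_sym)
qed (use empty_notin_F nu_F in auto)

lemma nu_left_le: "nu {B\<in>F. hi B $ 1 < L.threshold (Suc k)} \<le> enat k"
proof (rule nu_le_enatI)
  fix S assume "S \<subseteq> {B\<in>F. hi B $ 1 < L.threshold (Suc k)}" "finite S" "pairwise disjnt S"
  then have "card S < Suc k" by (intro L.card_less_if_below_threshold) auto
  then show "card S \<le> k" by simp
qed

lemma nu_right_le: "nu {B\<in>F. - R.threshold (Suc m) < lo B $ 1} \<le> enat m"
proof (rule nu_le_enatI)
  fix S assume "S \<subseteq> {B\<in>F. - R.threshold (Suc m) < lo B $ 1}" "finite S" "pairwise disjnt S"
  then have "card S < Suc m" by (intro R.card_less_if_below_threshold) auto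
  then show "card S \<le> m" by simp
qed

text \<open>A disjoint family \<open>S\<close> between the two thresholds is completed by \<open>k + 1\<close> disjoint boxes
  left of it; all of these lie left of \<open>-R.threshold (Suc m)\<close>, leaving room for \<open>m + 1\<close> more.\<close>
lemma nu_middle_le:
  assumes "k + l + m + 2 = n"
  shows "nu {B\<in>F. L.threshold (Suc k) < lo B $ 1 \<and> hi B $ 1 < - R.threshold (Suc m)} \<le> enat l"
    (is "nu ?Middle \<le> _")
proof (rule nu_le_enatI)
  fix S assume S: "S \<subseteq> ?Middle" "finite S" "pairwise disjnt S"
  show "card S \<le> l"
  proof (cases "S = {}")
    case False
    define z where "z = Min ((\<lambda>B. lo B $ 1) ` S)"
    have lo_S: "z \<le> lo B $ 1" if "B \<in> S" for B unfolding z_def using S(2) that by simp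
    have "L.threshold (Suc k) < z" unfolding z_def using S False by (subst Min_gr_iff) auto
    then obtain T where T: "T \<subseteq> F" "finite T" "pairwise disjnt T" "card T = Suc k"
      and hi_T: "\<forall>B\<in>T. hi B $ 1 < z"
      using L.disjoint_below_if_threshold_less[of "Suc k" z] assms by auto
    have cross: "\<forall>B\<in>T. \<forall>B'\<in>S. disjnt B B'"
    proof (intro ballI)
      fix B B' assume "B \<in> T" "B' \<in> S"
      then have "hi B $ 1 < lo B' $ 1" using hi_T lo_S by fastforce
      then show "disjnt B B'"
        using \<open>B \<in> T\<close> \<open>B' \<in> S\<close> T(1) S(1) boxes by (intro disjnt_boxes_if_hi_less_lo) auto
    qed
    obtain B0 where "B0 \<in> S" using False by blast
    moreover have "is_box B0" using \<open>B0 \<in> S\<close> S(1) boxes by auto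
    ultimately have "z \<le> hi B0 $ 1" "hi B0 $ 1 < - R.threshold (Suc m)"
      using lo_S[OF \<open>B0 \<in> S\<close>] lo_le_hi[of B0 1] S(1) by auto
    then have "\<forall>B\<in>T \<union> S. R.threshold (Suc m) < - hi B $ 1"
      using hi_T S(1) by force
    then have "card (T \<union> S) + Suc m \<le> n"
      using T S assms by (intro R.card_add_le_if_above_threshold pairwise_disjnt_Un cross) auto
    moreover have "T \<inter> S = {}"
      using empty_notin_F T(1) cross by (intro Int_empty_if_cross_disjnt) auto
    ultimately show ?thesis
      using T(2,4) S(2) assms by (simp add: card_Un_disjoint)
  qed simp
qed

end

lemma tau_le_f2_split:
  fixes F :: "(real^2) set set"
  assumes boxes: "\<forall>B\<in>F. is_box B" and nu_F: "nu F = enat n" and "k + l + m + 2 = n"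
  shows "tau F \<le> f2 k + f2 l + f2 m + enat (3 * n div 2)"
proof -
  interpret planar_box_family F n using boxes nu_F by unfold_locales
  define \<alpha> where "\<alpha> = L.threshold (Suc k)"
  define \<beta> where "\<beta> = - R.threshold (Suc m)"
  define Left where "Left = {B\<in>F. hi B $ 1 < \<alpha>}"
  define Middle where "Middle = {B\<in>F. \<alpha> < lo B $ 1 \<and> hi B $ 1 < \<beta>}"
  define Right where "Right = {B\<in>F. \<beta> < lo B $ 1}"
  define Walls where "Walls = {B\<in>F. meets_vline \<alpha> B \<or> meets_vline \<beta> B}"
  have "tau Left \<le> f2 k" "tau Middle \<le> f2 l" "tau Right \<le> f2 m"
    using nu_left_le nu_middle_le[OF \<open>k + l + m + 2 = n\<close>] nu_right_le \<open>k + l + m + 2 = n\<close>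
    by (auto intro!: tau_subfamily_le_f_box[OF boxes nu_F]
        simp: Left_def Middle_def Right_def \<alpha>_def \<beta>_def)
  moreover have "tau Walls \<le> enat (3 * n div 2)"
  proof (rule tau_le_if_meets_two_vlines)
    show "nu Walls \<le> enat n" using nu_mono[of Walls F] nu_F by (auto simp: Walls_def)
  qed (use boxes in \<open>auto simp: Walls_def\<close>)
  moreover have "F \<subseteq> Left \<union> Middle \<union> Right \<union> Walls"
  proof
    fix B assume "B \<in> F"
    moreover have "lo B $ 1 \<le> hi B $ 1" using \<open>B \<in> F\<close> boxes lo_le_hi by blast
    ultimately show "B \<in> Left \<union> Middle \<union> Right \<union> Walls"
      unfolding Left_def Middle_def Right_def Walls_def meets_vline_def by auto
  qed
  then have "tau F \<le> tau Left + tau Middle + tau Right + tau Walls"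
    using tau_Un_le[of "Left \<union> Middle \<union> Right" Walls] tau_Un_le[of "Left \<union> Middle" Right]
      tau_Un_le[of Left Middle] tau_mono[of F]
    by (meson add_right_mono order_trans)
  ultimately show ?thesis
    by (meson add_mono order_trans)
qed

theorem proposition2:
  fixes n :: nat
  assumes "n \<ge> 2"
  shows "\<forall>k l m. k + l + m = n - 2 \<longrightarrow>
           f2 n \<le> f2 k + f2 l + f2 m + enat (3 * n div 2)"
proof (intro allI impI)
  fix k l m assume "k + l + m = n - 2"
  with assms have "k + l + m + 2 = n" by simp
  then show "f2 n \<le> f2 k + f2 l + f2 m + enat (3 * n div 2)"
    by (intro f_box_le tau_le_f2_split)
qed

end
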